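(* In the two-period, four-sequence crossover design ($\mathcal{S}^{\mathrm{obs}}=\{AA,AB,BA,BB\}$, all $N_{\vec z}\ge1$) under complete randomization, suppose Assumption 1 holds and Assumptions 2 and 3 hold with $k=1$, so that $\tau_1=\tau_2(A)=\tau_2(B)=:\tau$. Then the BLUE of $\tau$ is $\widehat\tau=\sum_{t=1}^2\sum_{\vec z\in\mathcal{S}^{\mathrm{obs}}}\tilde w^*_t(\vec z)\widehat Y_t(\vec z)$, where the weights $\tilde w^*$ minimize $$f(\tilde w)=\sum_{z_1\in\{A,B\}}\Big\{\tfrac{\tilde w_1(z_1A)^2}{N_{z_1A}}+\tfrac{\tilde w_1(z_1B)^2}{N_{z_1B}}\Big\}S_1^2(z_1)+\sum_{z_2\in\{A,B\}}\Big\{\tfrac{\tilde w_2(Az_2)^2}{N_{Az_2}}+\tfrac{\tilde w_2(Bz_2)^2}{N_{Bz_2}}\Big\}S_2^2(z_2)+\sum_{z_1,z_2\in\{A,B\}}\tfrac{2\tilde w_1(z_1z_2)\tilde w_2(z_1z_2)S_{12}(z_1z_2)}{N_{z_1z_2}}$$ subject to the linear constraints $\tilde w_1(AA)+\tilde w_1(AB)+\tilde w_1(BA)+\tilde w_1(BB)=0$, $\tilde w_2(AA)+\tilde w_2(AB)+\tilde w_2(BA)+\tilde w_2(BB)=0$, and $\tilde w_1(AA)+\tilde w_1(AB)+\tilde w_2(AA)+\tilde w_2(BA)=1$.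
   Context: Setup: $N$ units, treatments $A,B$, $T$ periods; sequences $\vec z\in\{A,B\}^T$, $\vec z_{[t_1,t_2]}=z_{t_1}\cdots z_{t_2}$. Complete randomization with fixed positive group sizes $N_{\vec z}$ for $\vec z\in\mathcal{S}^{\mathrm{obs}}$; fixed potential outcomes $Y_{it}(\vec z)$, observed $Y_{it}=Y_{it}(\vec Z_i)$; randomness only from assignment. $\bar Y_t(\vec z)=N^{-1}\sum_iY_{it}(\vec z)$, $\widehat Y_t(\vec z)=N_{\vec z}^{-1}\sum_iY_{it}\mathbf1(\vec Z_i=\vec z)$. Assumption 1: $Y_{it}(\vec z)=Y_{it}(\vec z')$ whenever $\vec z_{[1,t]}=\vec z'_{[1,t]}$. Assumption 2 (order $k$): $Y_{it}(\vec z)=Y_{it}(\vec z')$ whenever $\vec z_{[\max(1,t-k+1),t]}=\vec z'_{[\max(1,t-k+1),t]}$; then $Y_{it}$ is a function $Y_{it}(a)$ of the window $a=\vec z_{[t-k+1,t]}$ for $t\ge k$. Assumption 3 (order $k$, requires Assumption 2 with same $k$): for all $a,b\in\{A,B\}^k$ and all $t'>t\ge k$, $Y_{it}(a)-Y_{it}(b)=Y_{it'}(a)-Y_{it'}(b)$. For $k=1,T=2$ this says $Y_{i1}(A)-Y_{i1}(B)=Y_{i2}(A)-Y_{i2}(B)$. Estimands: $\tau_1=\bar Y_1(A)-\bar Y_1(B)$, $\tau_2(z_1)=\bar Y_2(z_1A)-\bar Y_2(z_1B)$. Variance notation (divisor $N-1$): $S_t^2(\vec z)=\frac1{N-1}\sum_i\{Y_{it}(\vec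 z)-\bar Y_t(\vec z)\}^2$, $S_{12}(\vec z)=\frac1{N-1}\sum_i\{Y_{i1}(\vec z)-\bar Y_1(\vec z)\}\{Y_{i2}(\vec z)-\bar Y_2(\vec z)\}$; $S_1^2(z_1)$ denotes the common value $S_1^2(z_1A)=S_1^2(z_1B)$ and $S_2^2(z_2)$ the common value $S_2^2(Az_2)=S_2^2(Bz_2)$ (equal under the assumptions). A linear estimator is $\sum_{t}\sum_{\vec z\in\mathcal{S}^{\mathrm{obs}}}\tilde w_t(\vec z)\widehat Y_t(\vec z)$ with non-random weights; unbiased means expectation equals the estimand for every finite population satisfying the assumptions; BLUE means unbiased with variance, for the given population, no larger than any other unbiased linear estimator. *)

theory Defs
  imports Complex_Main "HOL-Library.FuncSet"
begin

text \<open>Two treatments; a treatment sequence over T = 2 periods is a pair (z1, z2).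
  Units are 0..N-1; periods are 1 and 2. Potential outcomes: Y i t z.\<close>

datatype trt = A | B

lemma UNIV_trt: "(UNIV :: trt set) = {A, B}"
  using trt.exhaust by auto

instance trt :: finite
  by standard (simp add: UNIV_trt)

type_synonym seq = "trt \<times> trt"
type_synonym pop = "nat \<Rightarrow> nat \<Rightarrow> seq \<Rightarrow> real"

definition assm1 :: "nat \<Rightarrow> pop \<Rightarrow> bool" where
  "assm1 N Y \<longleftrightarrow> (\<forall>i<N. \<forall>a b b'. Y i 1 (a, b) = Y i 1 (a, b'))"

definition assm2_k1 :: "nat \<Rightarrow> pop \<Rightarrow> bool" where
  "assm2_k1 N Y \<longleftrightarrow> (\<forall>i<N. (\<forall>a b b'. Y i 1 (a, b) = Y i 1 (a, b'))
                          \<and> (\<forall>a a' b. Y i 2 (a, b) = Y i 2 (a', b)))"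

text \<open>Assumption 3 with k = 1, T = 2: Y_i1(A) - Y_i1(B) = Y_i2(A) - Y_i2(B), where
  Y_i1(a) = Y i 1 (a, _) and Y_i2(a) = Y i 2 (_, a) (well-defined under Assumption 2).\<close>
definition assm3_k1 :: "nat \<Rightarrow> pop \<Rightarrow> bool" where
  "assm3_k1 N Y \<longleftrightarrow> (\<forall>i<N. Y i 1 (A, A) - Y i 1 (B, A) = Y i 2 (A, A) - Y i 2 (A, B))"

definition valid_pop :: "nat \<Rightarrow> pop \<Rightarrow> bool" where
  "valid_pop N Y \<longleftrightarrow> assm1 N Y \<and> assm2_k1 N Y \<and> assm3_k1 N Y"

definition Ybar :: "nat \<Rightarrow> pop \<Rightarrow> nat \<Rightarrow> seq \<Rightarrow> real" where
  "Ybar N Y t z = (\<Sum>i<N. Y i t z) / real N"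

definition tau :: "nat \<Rightarrow> pop \<Rightarrow> real" where
  "tau N Y = Ybar N Y 1 (A, A) - Ybar N Y 1 (B, A)"

definition assignments :: "nat \<Rightarrow> (seq \<Rightarrow> nat) \<Rightarrow> (nat \<Rightarrow> seq) set" where
  "assignments N Nz = {Z \<in> {..<N} \<rightarrow>\<^sub>E UNIV. \<forall>z. card {i\<in>{..<N}. Z i = z} = Nz z}"

definition expect :: "nat \<Rightarrow> (seq \<Rightarrow> nat) \<Rightarrow> ((nat \<Rightarrow> seq) \<Rightarrow> real) \<Rightarrow> real" where
  "expect N Nz g = (\<Sum>Z\<in>assignments N Nz. g Z) / real (card (assignments N Nz))"

definition var :: "nat \<Rightarrow> (seq \<Rightarrow> nat) \<Rightarrow> ((nat \<Rightarrow> seq) \<Rightarrow> real) \<Rightarrow> real" where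
  "var N Nz g = expect N Nz (\<lambda>Z. (g Z - expect N Nz g)^2)"

definition Yhat :: "nat \<Rightarrow> (seq \<Rightarrow> nat) \<Rightarrow> pop \<Rightarrow> nat \<Rightarrow> seq \<Rightarrow> (nat \<Rightarrow> seq) \<Rightarrow> real" where
  "Yhat N Nz Y t z Z = (\<Sum>i<N. if Z i = z then Y i t (Z i) else 0) / real (Nz z)"

definition lin_est :: "nat \<Rightarrow> (seq \<Rightarrow> nat) \<Rightarrow> pop \<Rightarrow> (seq \<Rightarrow> real) \<Rightarrow> (seq \<Rightarrow> real)
                        \<Rightarrow> (nat \<Rightarrow> seq) \<Rightarrow> real" where
  "lin_est N Nz Y w1 w2 Z = (\<Sum>z\<in>UNIV. w1 z * Yhat N Nz Y 1 z Z + w2 z * Yhat N Nz Y 2 z Z)"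

definition unbiased :: "nat \<Rightarrow> (seq \<Rightarrow> nat) \<Rightarrow> (seq \<Rightarrow> real) \<Rightarrow> (seq \<Rightarrow> real) \<Rightarrow> bool" where
  "unbiased N Nz w1 w2 \<longleftrightarrow>
     (\<forall>Y'. valid_pop N Y' \<longrightarrow> expect N Nz (lin_est N Nz Y' w1 w2) = tau N Y')"

definition BLUE :: "nat \<Rightarrow> (seq \<Rightarrow> nat) \<Rightarrow> pop \<Rightarrow> (seq \<Rightarrow> real) \<Rightarrow> (seq \<Rightarrow> real) \<Rightarrow> bool" where
  "BLUE N Nz Y w1 w2 \<longleftrightarrow> unbiased N Nz w1 w2 \<and>
     (\<forall>v1 v2. unbiased N Nz v1 v2 \<longrightarrow>
        var N Nz (lin_est N Nz Y w1 w2) \<le> var N Nz (lin_est N Nz Y v1 v2))"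

definition S2 :: "nat \<Rightarrow> pop \<Rightarrow> nat \<Rightarrow> seq \<Rightarrow> real" where
  "S2 N Y t z = (\<Sum>i<N. (Y i t z - Ybar N Y t z)^2) / (real N - 1)"

definition S12 :: "nat \<Rightarrow> pop \<Rightarrow> seq \<Rightarrow> real" where
  "S12 N Y z = (\<Sum>i<N. (Y i 1 z - Ybar N Y 1 z) * (Y i 2 z - Ybar N Y 2 z)) / (real N - 1)"

text \<open>Objective f; S_1^2(z1) := S_1^2(z1 A), S_2^2(z2) := S_2^2(A z2).\<close>
definition fobj :: "nat \<Rightarrow> (seq \<Rightarrow> nat) \<Rightarrow> pop \<Rightarrow> (seq \<Rightarrow> real) \<Rightarrow> (seq \<Rightarrow> real) \<Rightarrow> real" where
  "fobj N Nz Y w1 w2 =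
     (\<Sum>z1\<in>UNIV. (w1 (z1, A)^2 / real (Nz (z1, A)) + w1 (z1, B)^2 / real (Nz (z1, B)))
                   * S2 N Y 1 (z1, A))
   + (\<Sum>z2\<in>UNIV. (w2 (A, z2)^2 / real (Nz (A, z2)) + w2 (B, z2)^2 / real (Nz (B, z2)))
                   * S2 N Y 2 (A, z2))
   + (\<Sum>z\<in>UNIV. 2 * w1 z * w2 z * S12 N Y z / real (Nz z))"

definition constraints :: "(seq \<Rightarrow> real) \<Rightarrow> (seq \<Rightarrow> real) \<Rightarrow> bool" where
  "constraints w1 w2 \<longleftrightarrow>
     w1 (A,A) + w1 (A,B) + w1 (B,A) + w1 (B,B) = 0 \<and>
     w2 (A,A) + w2 (A,B) + w2 (B,A) + w2 (B,B) = 0 \<and>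
     w1 (A,A) + w1 (A,B) + w2 (A,A) + w2 (B,A) = 1"

end

(* Complete randomization makes the units exchangeable: composing an assignment with a
   transposition of two units permutes the assignment set. Hence unit i lies in group z with
   probability N_z / N, and distinct units i, j lie in groups z, z' with probability
   N_z (N_z' - [z = z']) / (N (N - 1)). Every linear estimator is a sum of group means of the
   unit-level contributions X_i(z) = w1(z) Y_i1(z) + w2(z) Y_i2(z); its expectation is
   sum_z (w1(z) Ybar_1(z) + w2(z) Ybar_2(z)) and, by Neyman's computation, its variance is
   sum_z S^2(X(z)) / N_z - S^2(sum_z X(z)) / N.

   The outcome profiles admissible under the assumptions form a three-dimensional space;
   requiring unbiasedness on a basis of it yields exactly the three constraints. Under the
   constraints sum_z X_i(z) is the unit-level effect Y_i1(A) - Y_i1(B), so the second variance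
   term does not depend on the weights while the first one is f. *)

theory Submission
  imports Defs "HOL-Combinatorics.Transposition"
begin

lemma UNIV_seq: "(UNIV :: seq set) = {(A,A), (A,B), (B,A), (B,B)}"
  using trt.exhaust by (auto simp: UNIV_trt)

lemma sum_UNIV_seq:
  "(\<Sum>z\<in>UNIV. f z) = f (A,A) + f (A,B) + f (B,A) + (f (B,B) :: 'a :: comm_monoid_add)"
  by (simp add: UNIV_seq add.assoc)

lemma finite_assignments: "finite (assignments N Nz)"
proof (rule finite_subset)
  show "assignments N Nz \<subseteq> {..<N} \<rightarrow>\<^sub>E UNIV"
    unfolding assignments_def by auto
qed (simp add: finite_PiE)

lemma assignments_nonempty:
  assumes "(\<Sum>z\<in>UNIV. Nz z) = N"
  shows "assignments N Nz \<noteq> {}"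
proof -
  obtain zs :: "seq list" where zs: "set zs = UNIV" "distinct zs"
    using finite_distinct_list[OF finite_UNIV] by blast
  define L where "L = concat (map (\<lambda>z. replicate (Nz z) z) zs)"
  have count: "length (filter (\<lambda>y. y = z) L) = Nz z" for z
  proof -
    have "length (filter (\<lambda>y. y = z) (replicate n x)) = (if x = z then n else 0)" for n x
      by simp
    then show ?thesis
      unfolding L_def filter_concat length_concat map_map
      by (simp add: comp_def sum_list_distinct_conv_sum_set[OF zs(2)] zs(1) del: filter_replicate)
  qed
  have len: "length L = N"
    using assms by (simp add: L_def length_concat comp_def sum_list_distinct_conv_sum_set zs)
  define Z where "Z = (\<lambda>i. if i < N then L ! i else undefined)"
  have "Z \<in> assignments N Nz"
    unfolding assignments_def
  proof (intro CollectI conjI allI)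
    show "Z \<in> {..<N} \<rightarrow>\<^sub>E UNIV"
      by (simp add: Z_def PiE_def extensional_def)
    show "card {i \<in> {..<N}. Z i = z} = Nz z" for z
      using count[of z] len
      by (simp add: length_filter_conv_card Z_def lessThan_def conj_commute cong: conj_cong)
  qed
  then show ?thesis
    by blast
qed

lemma assignments_comp_transpose:
  assumes "Z \<in> assignments N Nz" "a < N" "b < N"
  shows "Z \<circ> transpose a b \<in> assignments N Nz"
proof -
  have "{i \<in> {..<N}. (Z \<circ> transpose a b) i = z} = transpose a b ` {i \<in> {..<N}. Z i = z}" for z
    using assms(2,3) by (auto simp: in_transpose_image_iff transpose_def)
  moreover have "Z \<circ> transpose a b \<in> {..<N} \<rightarrow>\<^sub>E UNIV"
    using assms unfolding assignments_def by (auto simp: PiE_def extensional_def transpose_def)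
  ultimately show ?thesis
    using assms(1) unfolding assignments_def by (simp add: card_image inj_on_transpose)
qed

lemma expect_cong:
  assumes "\<And>Z. Z \<in> assignments N Nz \<Longrightarrow> f Z = g Z"
  shows "expect N Nz f = expect N Nz g"
  unfolding expect_def using assms by (simp cong: sum.cong)

lemma expect_sum: "expect N Nz (\<lambda>Z. \<Sum>k\<in>K. f k Z) = (\<Sum>k\<in>K. expect N Nz (f k))"
  unfolding expect_def by (simp add: sum.swap[of _ K] sum_divide_distrib)

lemma expect_diff: "expect N Nz (\<lambda>Z. f Z - g Z) = expect N Nz f - expect N Nz g"
  unfolding expect_def by (simp add: sum_subtractf diff_divide_distrib)

lemma expect_cmult: "expect N Nz (\<lambda>Z. c * f Z) = c * expect N Nz f"
  unfolding expect_def by (simp add: sum_distrib_left)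

lemma expect_divide: "expect N Nz (\<lambda>Z. f Z / c) = expect N Nz f / c"
  unfolding expect_def by (simp add: sum_divide_distrib mult.commute)

lemma expect_comp_transpose:
  assumes "a < N" "b < N"
  shows "expect N Nz (\<lambda>Z. f (Z \<circ> transpose a b)) = expect N Nz f"
proof -
  have "(\<Sum>Z\<in>assignments N Nz. f (Z \<circ> transpose a b)) = (\<Sum>Z\<in>assignments N Nz. f Z)"
    by (rule sum.reindex_bij_witness[of _ "\<lambda>Z. Z \<circ> transpose a b" "\<lambda>Z. Z \<circ> transpose a b"])
      (auto simp: comp_assoc assignments_comp_transpose[OF _ assms])
  then show ?thesis
    by (simp add: expect_def)
qed

definition cov :: "nat \<Rightarrow> (seq \<Rightarrow> nat) \<Rightarrow> ((nat \<Rightarrow> seq) \<Rightarrow> real) \<Rightarrow> ((nat \<Rightarrow> seq) \<Rightarrow> real) \<Rightarrow> real"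
  where "cov N Nz f g = expect N Nz (\<lambda>Z. (f Z - expect N Nz f) * (g Z - expect N Nz g))"

lemma var_sum:
  "var N Nz (\<lambda>Z. \<Sum>k\<in>K. f k Z) = (\<Sum>k\<in>K. \<Sum>l\<in>K. cov N Nz (f k) (f l))"
proof -
  have "(\<Sum>k\<in>K. f k Z) - expect N Nz (\<lambda>Z. \<Sum>k\<in>K. f k Z) = (\<Sum>k\<in>K. f k Z - expect N Nz (f k))" for Z
    by (simp add: expect_sum sum_subtractf)
  then show ?thesis
    unfolding var_def cov_def by (simp add: power2_eq_square sum_product expect_sum)
qed

definition sample_cov :: "nat \<Rightarrow> (nat \<Rightarrow> real) \<Rightarrow> (nat \<Rightarrow> real) \<Rightarrow> real" where
  "sample_cov N x y =
     (\<Sum>i<N. (x i - (\<Sum>j<N. x j) / N) * (y i - (\<Sum>j<N. y j) / N)) / (real N - 1)"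

lemma sample_cov_altdef:
  assumes "0 < N"
  shows "sample_cov N x y = ((\<Sum>i<N. x i * y i) - (\<Sum>i<N. x i) * (\<Sum>i<N. y i) / N) / (real N - 1)"
proof -
  have shift: "(\<Sum>i<N. (x i - p) * (y i - q))
      = (\<Sum>i<N. x i * y i) - q * (\<Sum>i<N. x i) - p * (\<Sum>i<N. y i) + real N * p * q" for p q :: real
    by (simp add: algebra_simps sum.distrib sum_subtractf sum_distrib_left sum_distrib_right)
  have "(\<Sum>i<N. (x i - (\<Sum>j<N. x j) / N) * (y i - (\<Sum>j<N. y j) / N))
      = (\<Sum>i<N. x i * y i) - (\<Sum>i<N. x i) * (\<Sum>i<N. y i) / N"
    unfolding shift using assms by (simp add: field_simps)
  then show ?thesis
    unfolding sample_cov_def by simp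
qed

lemma sample_cov_cong:
  assumes "\<And>i. i < N \<Longrightarrow> x i = x' i" "\<And>i. i < N \<Longrightarrow> y i = y' i"
  shows "sample_cov N x y = sample_cov N x' y'"
proof -
  have sums: "sum x {..<N} = sum x' {..<N}" "sum y {..<N} = sum y' {..<N}"
    using assms by (auto intro: sum.cong)
  show ?thesis
    unfolding sample_cov_def sums
    by (intro arg_cong2[where f = "(/)"] sum.cong) (simp_all add: assms)
qed

lemma deviation_sum:
  fixes u :: "'a \<Rightarrow> nat \<Rightarrow> real"
  shows "(\<Sum>k\<in>K. u k i) - (\<Sum>j<N. \<Sum>k\<in>K. u k j) / N = (\<Sum>k\<in>K. u k i - (\<Sum>j<N. u k j) / N)"
  by (simp add: sum.swap[of _ "{..<N}"] sum_subtractf sum_divide_distrib)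

lemma sample_cov_sum:
  "sample_cov N (\<lambda>i. \<Sum>k\<in>K. x k i) (\<lambda>i. \<Sum>l\<in>L. y l i)
     = (\<Sum>k\<in>K. \<Sum>l\<in>L. sample_cov N (x k) (y l))"
  unfolding sample_cov_def deviation_sum sum_product
  by (simp add: sum.swap[of _ "{..<N}"] sum_divide_distrib)

lemma sample_cov_lincomb:
  "sample_cov N (\<lambda>i. a * x i + b * y i) (\<lambda>i. a * x i + b * y i)
     = a\<^sup>2 * sample_cov N x x + 2 * a * b * sample_cov N x y + b\<^sup>2 * sample_cov N y y"
proof -
  have centre: "a * x i + b * y i - (\<Sum>j<N. a * x j + b * y j) / N
      = a * (x i - (\<Sum>j<N. x j) / N) + b * (y i - (\<Sum>j<N. y j) / N)" for i
    by (simp add: sum.distrib sum_distrib_left add_divide_distrib algebra_simps)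
  have expand: "(a * p + b * q) * (a * p + b * q)
      = a\<^sup>2 * (p * p) + 2 * a * b * (p * q) + b\<^sup>2 * (q * q)" for p q :: real
    by (simp add: power2_eq_square algebra_simps)
  show ?thesis
    unfolding sample_cov_def centre expand
    by (simp only: sum.distrib sum_distrib_left[symmetric] add_divide_distrib times_divide_eq_right)
qed

lemma S2_eq_sample_cov: "S2 N Y t z = sample_cov N (\<lambda>i. Y i t z) (\<lambda>i. Y i t z)"
  unfolding S2_def Ybar_def sample_cov_def by (simp add: power2_eq_square)

lemma S12_eq_sample_cov: "S12 N Y z = sample_cov N (\<lambda>i. Y i 1 z) (\<lambda>i. Y i 2 z)"
  unfolding S12_def Ybar_def sample_cov_def ..

definition group_mean :: "nat \<Rightarrow> (seq \<Rightarrow> nat) \<Rightarrow> (nat \<Rightarrow> real) \<Rightarrow> seq \<Rightarrow> (nat \<Rightarrow> seq) \<Rightarrow> real"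
  where "group_mean N Nz x z Z = (\<Sum>i<N. x i * of_bool (Z i = z)) / Nz z"

lemma Yhat_eq_group_mean: "Yhat N Nz Y t z Z = group_mean N Nz (\<lambda>i. Y i t z) z Z"
proof -
  have "(\<Sum>i<N. if Z i = z then Y i t (Z i) else 0) = (\<Sum>i<N. Y i t z * of_bool (Z i = z))"
    by (rule sum.cong) auto
  then show ?thesis
    unfolding Yhat_def group_mean_def by simp
qed

lemma group_mean_lincomb:
  "group_mean N Nz (\<lambda>i. a * x i + b * y i) z Z
     = a * group_mean N Nz x z Z + b * group_mean N Nz y z Z"
  unfolding group_mean_def
  by (simp only: distrib_right sum.distrib mult.assoc sum_distrib_left[symmetric] add_divide_distrib
      times_divide_eq_right)

lemma lin_est_eq_sum_group_means:
  "lin_est N Nz Y w1 w2 Z = (\<Sum>z\<in>UNIV. group_mean N Nz (\<lambda>i. w1 z * Y i 1 z + w2 z * Y i 2 z) z Z)"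
  unfolding lin_est_def Yhat_eq_group_mean group_mean_lincomb ..

lemma expect_group_mean_mult:
  "expect N Nz (\<lambda>Z. group_mean N Nz x z Z * group_mean N Nz y z' Z)
     = (\<Sum>i<N. \<Sum>j<N. x i * y j * expect N Nz (\<lambda>Z. of_bool (Z i = z) * of_bool (Z j = z')))
         / (real (Nz z) * real (Nz z'))"
proof -
  have "group_mean N Nz x z Z * group_mean N Nz y z' Z
      = (\<Sum>i<N. \<Sum>j<N. x i * y j * (of_bool (Z i = z) * of_bool (Z j = z')))
        / (real (Nz z) * real (Nz z'))" for Z
    unfolding group_mean_def times_divide_times_eq sum_product by (simp only: mult_ac)
  then show ?thesis
    by (simp only: expect_divide expect_sum expect_cmult)
qed

definition no_carryover_constant_effect :: "(seq \<Rightarrow> real) \<Rightarrow> (seq \<Rightarrow> real) \<Rightarrow> bool" where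
  "no_carryover_constant_effect f1 f2 \<longleftrightarrow>
     (\<forall>a. f1 (a, B) = f1 (a, A)) \<and> (\<forall>b. f2 (B, b) = f2 (A, b)) \<and>
     f1 (A, A) - f1 (B, A) = f2 (A, A) - f2 (A, B)"

lemma valid_pop_iff: "valid_pop N Y \<longleftrightarrow> (\<forall>i<N. no_carryover_constant_effect (Y i 1) (Y i 2))"
proof -
  have first: "(\<forall>a b b'. f (a, b) = f (a, b')) \<longleftrightarrow> (\<forall>a. f (a, B) = f (a, A))"
    and second: "(\<forall>a a' b. f (a, b) = f (a', b)) \<longleftrightarrow> (\<forall>b. f (B, b) = f (A, b))"
    for f :: "seq \<Rightarrow> real"
    by (metis trt.exhaust)+
  show ?thesis
    unfolding valid_pop_def assm1_def assm2_k1_def assm3_k1_def no_carryover_constant_effect_def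
    by (simp add: first second) blast
qed

lemma no_carryover_constant_effect_Ybar:
  assumes "valid_pop N Y"
  shows "no_carryover_constant_effect (Ybar N Y 1) (Ybar N Y 2)"
proof -
  have unit: "no_carryover_constant_effect (Y i 1) (Y i 2)" if "i < N" for i
    using assms that by (simp add: valid_pop_iff)
  have "(\<Sum>i<N. Y i 1 (A, A) - Y i 1 (B, A)) = (\<Sum>i<N. Y i 2 (A, A) - Y i 2 (A, B))"
    using unit by (intro sum.cong) (auto simp: no_carryover_constant_effect_def)
  then show ?thesis
    using unit unfolding no_carryover_constant_effect_def Ybar_def
    by (auto simp: sum_subtractf diff_divide_distrib[symmetric]
        intro!: arg_cong[where f = "\<lambda>s. s / _"] sum.cong)
qed

lemma weighted_sum_eq_effect:
  assumes "constraints w1 w2" "no_carryover_constant_effect f1 f2"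
  shows "(\<Sum>z\<in>UNIV. w1 z * f1 z + w2 z * f2 z) = f1 (A, A) - f1 (B, A)"
proof -
  have f: "f1 (A, B) = f1 (A, A)" "f1 (B, B) = f1 (B, A)"
    "f2 (B, A) = f2 (A, A)" "f2 (B, B) = f2 (A, B)"
    "f2 (A, B) = f2 (A, A) - f1 (A, A) + f1 (B, A)"
    using assms(2) unfolding no_carryover_constant_effect_def by auto
  have w: "w1 (B, B) = - w1 (A, A) - w1 (A, B) - w1 (B, A)"
    "w2 (B, B) = - w2 (A, A) - w2 (A, B) - w2 (B, A)"
    "w2 (B, A) = 1 - w1 (A, A) - w1 (A, B) - w2 (A, A)"
    using assms(1) unfolding constraints_def by linarith+
  show ?thesis
    unfolding sum_UNIV_seq f w by (simp add: algebra_simps)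
qed

lemma constraints_iff_weighted_sum_eq_effect:
  "constraints w1 w2 \<longleftrightarrow>
     (\<forall>f1 f2. no_carryover_constant_effect f1 f2 \<longrightarrow>
        (\<Sum>z\<in>UNIV. w1 z * f1 z + w2 z * f2 z) = f1 (A, A) - f1 (B, A))"
proof (intro iffI allI impI)
  assume eff: "\<forall>f1 f2. no_carryover_constant_effect f1 f2 \<longrightarrow>
      (\<Sum>z\<in>UNIV. w1 z * f1 z + w2 z * f2 z) = f1 (A, A) - f1 (B, A)"
  have "no_carryover_constant_effect (\<lambda>_. 1) (\<lambda>_. 0)"
    "no_carryover_constant_effect (\<lambda>_. 0) (\<lambda>_. 1)"
    "no_carryover_constant_effect (\<lambda>z. of_bool (fst z = A)) (\<lambda>z. of_bool (snd z = A))"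
    unfolding no_carryover_constant_effect_def by simp_all
  from this[THEN eff[rule_format]]
  have "w1 (A, A) + w1 (A, B) + w1 (B, A) + w1 (B, B) = 0"
    "w2 (A, A) + w2 (A, B) + w2 (B, A) + w2 (B, B) = 0"
    "w1 (A, A) + w1 (A, B) + w2 (A, A) + w2 (B, A) = 1"
    by (simp_all add: sum_UNIV_seq)
  then show "constraints w1 w2"
    unfolding constraints_def by blast
qed (rule weighted_sum_eq_effect)

lemma fobj_eq_sum_sample_cov:
  assumes "valid_pop N Y"
  shows "fobj N Nz Y w1 w2 = (\<Sum>z\<in>UNIV.
    sample_cov N (\<lambda>i. w1 z * Y i 1 z + w2 z * Y i 2 z)
      (\<lambda>i. w1 z * Y i 1 z + w2 z * Y i 2 z) / Nz z)"
proof -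
  have unit: "no_carryover_constant_effect (Y i 1) (Y i 2)" if "i < N" for i
    using assms that by (simp add: valid_pop_iff)
  have S2_1: "S2 N Y 1 (a, B) = S2 N Y 1 (a, A)" for a
    unfolding S2_eq_sample_cov
    by (rule sample_cov_cong) (use unit in \<open>simp_all add: no_carryover_constant_effect_def\<close>)
  have S2_2: "S2 N Y 2 (B, b) = S2 N Y 2 (A, b)" for b
    unfolding S2_eq_sample_cov
    by (rule sample_cov_cong) (use unit in \<open>simp_all add: no_carryover_constant_effect_def\<close>)
  have "sample_cov N (\<lambda>i. w1 z * Y i 1 z + w2 z * Y i 2 z) (\<lambda>i. w1 z * Y i 1 z + w2 z * Y i 2 z)
      = (w1 z)\<^sup>2 * S2 N Y 1 z + 2 * w1 z * w2 z * S12 N Y z + (w2 z)\<^sup>2 * S2 N Y 2 z" for z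
    by (simp add: sample_cov_lincomb S2_eq_sample_cov S12_eq_sample_cov)
  then show ?thesis
    unfolding fobj_def sum_UNIV_seq UNIV_trt
    using S2_1[of A] S2_1[of B] S2_2[of A] S2_2[of B]
    by (simp add: add_divide_distrib algebra_simps)
qed

locale completely_randomized =
  fixes N :: nat and Nz :: "seq \<Rightarrow> nat"
  assumes group_sizes_pos: "\<And>z. 0 < Nz z"
    and sum_group_sizes: "(\<Sum>z\<in>UNIV. Nz z) = N"
begin

lemma four_le_N: "4 \<le> N"
proof -
  have "(\<Sum>z\<in>(UNIV :: seq set). 1) \<le> (\<Sum>z\<in>UNIV. Nz z)"
    by (rule sum_mono) (simp add: Suc_leI group_sizes_pos)
  then show ?thesis
    using sum_group_sizes by (simp add: UNIV_seq)
qed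

lemma expect_const: "expect N Nz (\<lambda>_. c) = c"
  using assignments_nonempty[OF sum_group_sizes] finite_assignments
  by (simp add: expect_def)

lemma cov_eq_expect_mult:
  "cov N Nz f g = expect N Nz (\<lambda>Z. f Z * g Z) - expect N Nz f * expect N Nz g"
proof -
  have "(f Z - a) * (g Z - b) = (f Z * g Z - b * f Z) - (a * g Z - a * b)" for Z and a b :: real
    by (simp add: algebra_simps)
  then show ?thesis
    unfolding cov_def by (simp add: expect_diff expect_cmult expect_const)
qed

lemma sum_indicator_eq_group_size:
  assumes "Z \<in> assignments N Nz"
  shows "(\<Sum>i<N. of_bool (Z i = z) :: real) = Nz z"
proof -
  have "card {i \<in> {..<N}. Z i = z} = Nz z"
    using assms unfolding assignments_def by blast
  then show ?thesis
    by (simp add: Int_def)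
qed

lemma expect_indicator:
  assumes "i < N"
  shows "expect N Nz (\<lambda>Z. of_bool (Z i = z)) = Nz z / N"
proof -
  have same: "expect N Nz (\<lambda>Z. of_bool (Z k = z)) = expect N Nz (\<lambda>Z. of_bool (Z i = z))"
    if "k < N" for k
    using expect_comp_transpose[OF assms that, where f = "\<lambda>Z. of_bool (Z i = z)"] by simp
  have "N * expect N Nz (\<lambda>Z. of_bool (Z i = z)) = (\<Sum>k<N. expect N Nz (\<lambda>Z. of_bool (Z k = z)))"
    using same by simp
  also have "\<dots> = expect N Nz (\<lambda>Z. \<Sum>k<N. of_bool (Z k = z))"
    by (rule expect_sum[symmetric])
  also have "\<dots> = expect N Nz (\<lambda>_. Nz z)"
    by (rule expect_cong) (rule sum_indicator_eq_group_size)
  also have "\<dots> = Nz z"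
    by (rule expect_const)
  finally show ?thesis
    using four_le_N by (simp add: field_simps)
qed

lemma expect_indicator_mult_distinct:
  assumes "i < N" "j < N" "i \<noteq> j"
  shows "expect N Nz (\<lambda>Z. of_bool (Z i = z) * of_bool (Z j = z'))
    = real (Nz z) * (real (Nz z') - of_bool (z = z')) / (real N * (real N - 1))"
proof -
  let ?p = "\<lambda>k. expect N Nz (\<lambda>Z. of_bool (Z i = z) * of_bool (Z k = z'))"
  have same: "?p k = ?p j" if "k < N" "k \<noteq> i" for k
    using expect_comp_transpose[OF assms(2) that(1),
        where f = "\<lambda>Z. of_bool (Z i = z) * of_bool (Z j = z')"] that assms(3)
    by simp
  have "(real N - 1) * ?p j = (\<Sum>k\<in>{..<N} - {i}. ?p k)"
    using same assms(1) by (simp add: of_nat_diff)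
  also have "\<dots> = expect N Nz (\<lambda>Z. of_bool (Z i = z) * (\<Sum>k\<in>{..<N} - {i}. of_bool (Z k = z')))"
    unfolding sum_distrib_left by (rule expect_sum[symmetric])
  also have "\<dots> = expect N Nz (\<lambda>Z. (real (Nz z') - of_bool (z = z')) * of_bool (Z i = z))"
  proof (rule expect_cong)
    fix Z assume "Z \<in> assignments N Nz"
    then have others: "(\<Sum>k\<in>{..<N} - {i}. of_bool (Z k = z')) = real (Nz z') - of_bool (Z i = z')"
      using sum_indicator_eq_group_size assms(1) by (simp add: sum_diff1 del: sum_of_bool_eq)
    show "of_bool (Z i = z) * (\<Sum>k\<in>{..<N} - {i}. of_bool (Z k = z')) =
        (real (Nz z') - of_bool (z = z')) * of_bool (Z i = z)"
      unfolding others by auto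
  qed
  also have "\<dots> = (real (Nz z') - of_bool (z = z')) * (Nz z / N)"
    by (simp add: expect_cmult expect_indicator assms(1))
  finally show ?thesis
    using four_le_N by (simp add: field_simps)
qed

lemma expect_indicator_mult:
  assumes "i < N" "j < N"
  shows "expect N Nz (\<lambda>Z. of_bool (Z i = z) * of_bool (Z j = z'))
    = (if i = j then of_bool (z = z') * Nz z / N
       else real (Nz z) * (real (Nz z') - of_bool (z = z')) / (real N * (real N - 1)))"
proof (cases "i = j")
  case True
  then have "expect N Nz (\<lambda>Z. of_bool (Z i = z) * of_bool (Z j = z'))
      = expect N Nz (\<lambda>Z. of_bool (z = z') * of_bool (Z i = z))"
    by (auto intro: expect_cong)
  then show ?thesis
    using True assms by (simp add: expect_cmult expect_indicator)
next
  case False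
  then show ?thesis
    using assms by (simp add: expect_indicator_mult_distinct)
qed

lemma expect_group_mean: "expect N Nz (group_mean N Nz x z) = (\<Sum>i<N. x i) / N"
proof -
  have "group_mean N Nz x z = (\<lambda>Z. inverse (Nz z) * (\<Sum>i<N. x i * of_bool (Z i = z)))"
    unfolding group_mean_def
    by (simp add: fun_eq_iff divide_inverse mult.commute del: sum_mult_of_bool_eq)
  then have "expect N Nz (group_mean N Nz x z) = inverse (Nz z) * (\<Sum>i<N. x i * (Nz z / N))"
    by (simp add: expect_cmult expect_sum expect_indicator del: sum_mult_of_bool_eq)
  also have "\<dots> = inverse (Nz z) * ((\<Sum>i<N. x i) * (Nz z / N))"
    by (simp only: sum_distrib_right[symmetric])
  finally show ?thesis
    using group_sizes_pos[of z] by (simp add: field_simps)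
qed

lemma cov_group_mean:
  "cov N Nz (group_mean N Nz x z) (group_mean N Nz y z')
     = of_bool (z = z') * sample_cov N x y / Nz z - sample_cov N x y / N"
proof -
  define p where "p = real (Nz z) * (real (Nz z') - of_bool (z = z')) / (real N * (real N - 1))"
  define d where "d = of_bool (z = z') * Nz z / N"
  have "(\<Sum>i<N. \<Sum>j<N. x i * y j * expect N Nz (\<lambda>Z. of_bool (Z i = z) * of_bool (Z j = z')))
      = (\<Sum>i<N. \<Sum>j<N. p * (x i * y j) + of_bool (i = j) * ((d - p) * (x i * y j)))"
    by (intro sum.cong refl) (simp add: expect_indicator_mult p_def d_def algebra_simps)
  also have "\<dots> = p * (\<Sum>i<N. x i) * (\<Sum>i<N. y i) + (d - p) * (\<Sum>i<N. x i * y i)"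
    by (simp add: sum.distrib sum_distrib_left[symmetric] sum_product mult.assoc)
  finally have "cov N Nz (group_mean N Nz x z) (group_mean N Nz y z')
      = (p * (\<Sum>i<N. x i) * (\<Sum>i<N. y i) + (d - p) * (\<Sum>i<N. x i * y i))
          / (real (Nz z) * real (Nz z')) - (\<Sum>i<N. x i) / N * ((\<Sum>i<N. y i) / N)"
    by (simp add: cov_eq_expect_mult expect_group_mean_mult expect_group_mean)
  also have "\<dots> = of_bool (z = z') * sample_cov N x y / Nz z - sample_cov N x y / N"
  proof -
    have nonzero: "0 < N" "real N - 1 \<noteq> 0" "real (Nz z) \<noteq> 0" "real (Nz z') \<noteq> 0"
      using four_le_N group_sizes_pos[of z] group_sizes_pos[of z'] by auto
    then show ?thesis
      by (cases "z = z'")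
        (simp_all add: sample_cov_altdef p_def d_def divide_simps, simp_all add: algebra_simps)
  qed
  finally show ?thesis .
qed

lemma var_sum_group_means:
  "var N Nz (\<lambda>Z. \<Sum>z\<in>UNIV. group_mean N Nz (X z) z Z)
     = (\<Sum>z\<in>UNIV. sample_cov N (X z) (X z) / Nz z)
       - sample_cov N (\<lambda>i. \<Sum>z\<in>UNIV. X z i) (\<lambda>i. \<Sum>z\<in>UNIV. X z i) / N"
proof -
  have "var N Nz (\<lambda>Z. \<Sum>z\<in>UNIV. group_mean N Nz (X z) z Z)
      = (\<Sum>z\<in>UNIV. \<Sum>z'\<in>UNIV. of_bool (z = z') * sample_cov N (X z) (X z') / Nz z)
        - (\<Sum>z\<in>UNIV. \<Sum>z'\<in>UNIV. sample_cov N (X z) (X z')) / N"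
    by (simp add: var_sum cov_group_mean sum_subtractf sum_divide_distrib del: sum_of_bool_mult_eq)
  moreover have "(\<Sum>z'\<in>UNIV. of_bool (z = z') * sample_cov N (X z) (X z') / Nz z)
      = sample_cov N (X z) (X z) / Nz z" for z
    by (simp add: sum_divide_distrib[symmetric])
  ultimately show ?thesis
    by (simp add: sample_cov_sum)
qed

lemma expect_lin_est:
  "expect N Nz (lin_est N Nz Y w1 w2) = (\<Sum>z\<in>UNIV. w1 z * Ybar N Y 1 z + w2 z * Ybar N Y 2 z)"
  unfolding lin_est_eq_sum_group_means expect_sum expect_group_mean Ybar_def
  by (simp add: sum.distrib sum_distrib_left add_divide_distrib)

lemma unbiased_iff_constraints: "unbiased N Nz w1 w2 \<longleftrightarrow> constraints w1 w2"
proof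
  assume "constraints w1 w2"
  then show "unbiased N Nz w1 w2"
    unfolding unbiased_def tau_def expect_lin_est
    by (blast intro: weighted_sum_eq_effect no_carryover_constant_effect_Ybar)
next
  assume unbiased: "unbiased N Nz w1 w2"
  show "constraints w1 w2"
    unfolding constraints_iff_weighted_sum_eq_effect
  proof (intro allI impI)
    fix f1 f2 assume profile: "no_carryover_constant_effect f1 f2"
    define Y' :: pop where "Y' = (\<lambda>i t. if t = 1 then f1 else f2)"
    have "valid_pop N Y'"
      using profile by (simp add: valid_pop_iff Y'_def)
    then have "(\<Sum>z\<in>UNIV. w1 z * Ybar N Y' 1 z + w2 z * Ybar N Y' 2 z)
        = Ybar N Y' 1 (A, A) - Ybar N Y' 1 (B, A)"
      using unbiased by (simp add: unbiased_def expect_lin_est tau_def)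
    moreover have "Ybar N Y' 1 = f1" "Ybar N Y' 2 = f2"
      using four_le_N by (auto simp: Ybar_def Y'_def)
    ultimately show "(\<Sum>z\<in>UNIV. w1 z * f1 z + w2 z * f2 z) = f1 (A, A) - f1 (B, A)"
      by simp
  qed
qed

lemma var_lin_est:
  assumes "valid_pop N Y" "constraints w1 w2"
  shows "var N Nz (lin_est N Nz Y w1 w2) = fobj N Nz Y w1 w2
    - sample_cov N (\<lambda>i. Y i 1 (A, A) - Y i 1 (B, A)) (\<lambda>i. Y i 1 (A, A) - Y i 1 (B, A)) / N"
proof -
  have "(\<Sum>z\<in>UNIV. w1 z * Y i 1 z + w2 z * Y i 2 z) = Y i 1 (A, A) - Y i 1 (B, A)" if "i < N" for i
    using assms that by (simp add: valid_pop_iff weighted_sum_eq_effect)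
  then show ?thesis
    unfolding lin_est_eq_sum_group_means var_sum_group_means fobj_eq_sum_sample_cov[OF assms(1)]
    by (simp cong: sample_cov_cong)
qed

end

theorem proposition3:
  fixes N :: nat and Nz :: "seq \<Rightarrow> nat" and Y :: pop
  assumes "\<forall>z. Nz z \<ge> 1"
    and "(\<Sum>z\<in>UNIV. Nz z) = N"
    and "valid_pop N Y"
  shows "\<forall>w1 w2. BLUE N Nz Y w1 w2 \<longleftrightarrow>
           (constraints w1 w2 \<and> (\<forall>v1 v2. constraints v1 v2 \<longrightarrow> fobj N Nz Y w1 w2 \<le> fobj N Nz Y v1 v2))"
proof -
  interpret completely_randomized N Nz
    using assms(1,2) by unfold_locales (auto simp: Suc_le_eq)
  show ?thesis
    using var_lin_est[OF assms(3)] by (auto simp: BLUE_def unbiased_iff_constraints)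
qed

end
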